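(* Let $N\ge3$, $G\in\mathcal G_2(N)$, $\varepsilon=0$ and $s_0\in S_{nc}$. Then for every $\gamma\in(0,1)$, $\Gamma_N(G|s_0,\gamma,0)$ has a positional trigger strategies profile $\bar\sigma$.
   Context: Setting. $G=(V,E)$ is a finite, simple, connected, undirected graph; $N\ge 3$ is an integer; $\gamma\in(0,1)$ and $\varepsilon\in[0,\frac1{N-1}]$ are parameters. There are $N$ tokens: cops $C_1,\dots,C_{N-1}$ (tokens $1,\dots,N-1$) and the robber $R$ (token $N$). A state is $s=(x^1,\dots,x^N,n)$ where $x^i\in V$ is the position of token $i$ and $n\in\{1,\dots,N\}$ is the token that moves next; $S^n$ denotes the set of states with token $n$ to move. A state is a capture state if $x^i=x^N$ for some $i\le N-1$; $S_{nc}$ is the set of noncapture states. In each turn exactly one token, the one to move, moves to a vertex of its closed neighbourhood (it may stay put); the order of moves is $C_1,C_2,\dots,C_{N-1},R,C_1,\dots$. Starting from an initial state $s_0\in S_{nc}$ at time $0$, the capture time is the first time $t$ at which a capture state occurs (infinite if never); after capture the game is over. Auxiliary games. For $m\in\{1,\dots,N\}$, $\Gamma_N^m(G|s_0,\gamma,\varepsilon)$ is the two-player zero-sum game in which player $P_m$ controls token $m$ and player $P_{-m}$ controls all other tokens, with the following payoff to $P_m$ ($P_{-m}$ receives its negative): $0$ if no capture ever occurs; if capture occurs at time $t$: for $m=N$, $-\gamma^t$; for $m\le N-1$, $\frac{1-\varepsilon}{K}\gamma^t$ if exactly $K\in\{1,\dots,N-2\}$ cops, including $C_m$, are on the robber's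 vertex, $\frac{\varepsilon}{N-K-1}\gamma^t$ if exactly $K\in\{1,\dots,N-2\}$ cops, not including $C_m$, are on the robber's vertex, and $\frac{\gamma^t}{N-1}$ if all $N-1$ cops are on the robber's vertex. $\Gamma^N_N$ is the modified cops-and-robber (CR) game. A pure positional strategy for token $n$ maps each state in $S^n\cap S_{nc}$ to an allowed next vertex. Each $\Gamma^m_N$ has optimal pure positional strategies (optimal from every initial state). For $m,n\in\{1,\dots,N\}$, $\phi^n_m$ denotes the strategy of token $n$ in a chosen pair of optimal pure positional strategies of $\Gamma^m_N$ (so $\phi^m_m$ is $P_m$'s optimal strategy and $(\phi^n_m)_{n\ne m}$ is $P_{-m}$'s). $\widehat\Sigma^n$ is the set of pure positional strategies of token $n$ that are components of optimal strategy pairs of $\Gamma^N_N$ (CR-optimal strategies). Trigger strategies. Given a choice of $(\phi^n_m)_{n,m}$, the trigger strategies profile $\bar\sigma=(\bar\sigma^1,\dots,\bar\sigma^N)$ of the $N$-player SCAR game $\Gamma_N(G|s_0,\gamma,\varepsilon)$ (same board and moves; player $n$ controls token $n$) is: token $n$, at current state $s$, plays $\phi^n_n(s)$ as long as every other player $m$ has followed $\phi^m_m$, and plays $\phi^n_m(s)$ from the moment a player $m\neq n$ deviates from $\phi^m_m$. Different choices of the optimal strategies give different trigger strategies profiles. $\bar\sigma$ is called positional if for all $n,m\in\{1,\dots,N\}$ there is $\widehat\sigma^n\in\widehat\Sigma^n$ with $\phi^n_m(s)=\widehat\sigma^n(s)$ for every state $s\in S^n\cap S_{nc}$ reachable from $s_0$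 by a finite sequence of legal moves passing only through noncapture states; otherwise $\bar\sigma$ is nonpositional. State cop number. For $s\in S_{nc}$, $c(G|s)=c_N(G|s)$ is the minimum $k\in\{1,\dots,N-1\}$ for which there exist $k$ cops and strategies for them such that, starting from $s$, a capture (by any cop) occurs whatever the other $N-k$ tokens (including $R$) do; $c(G|s)=\infty$ if no such $k$ exists. $c(G)$ is the classical cop number of $G$. Graph classes. $\mathcal G(N)=\{G: c(G)>N-1\}$; $\mathcal G_2(N)=\{G\in\mathcal G(N): c(G|s)=\infty\text{ for all } s\in S^N\cap S_{nc}\}$. *)

theory Defs
  imports Main "HOL.Real"
begin

definition fsc_graph :: "'v set \<Rightarrow> ('v \<Rightarrow> 'v \<Rightarrow> bool) \<Rightarrow> bool" where
  "fsc_graph V E \<longleftrightarrow> finite V \<and> V \<noteq> {}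
     \<and> (\<forall>x y. E x y \<longrightarrow> x \<in> V \<and> y \<in> V)
     \<and> (\<forall>x y. E x y \<longrightarrow> E y x)
     \<and> (\<forall>x. \<not> E x x)
     \<and> (\<forall>x\<in>V. \<forall>y\<in>V. (x, y) \<in> {(a, b). E a b}\<^sup>*)"

definition cnbhd :: "('v \<Rightarrow> 'v \<Rightarrow> bool) \<Rightarrow> 'v \<Rightarrow> 'v set" where
  "cnbhd E x = insert x {y. E x y}"

text \<open>A state is (xs, n): xs is the list of positions, token i (1 \<le> i \<le> N)
being at xs ! (i - 1); n \<in> {1..N} is the token to move.  Tokens 1..N-1 are the
cops, token N is the robber.\<close>
type_synonym 'v state = "'v list \<times> nat"
type_synonym 'v hist = "'v state list"

definition tpos :: "'v list \<Rightarrow> nat \<Rightarrow> 'v" where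
  "tpos xs i = xs ! (i - 1)"

definition valid_state :: "nat \<Rightarrow> 'v set \<Rightarrow> 'v state \<Rightarrow> bool" where
  "valid_state N V s \<longleftrightarrow> length (fst s) = N \<and> set (fst s) \<subseteq> V \<and> snd s \<in> {1..N}"

definition is_capture :: "nat \<Rightarrow> 'v state \<Rightarrow> bool" where
  "is_capture N s \<longleftrightarrow> (\<exists>i\<in>{1..N-1}. tpos (fst s) i = tpos (fst s) N)"

definition next_tok :: "nat \<Rightarrow> nat \<Rightarrow> nat" where
  "next_tok N n = (if N \<le> n then 1 else Suc n)"

definition move :: "nat \<Rightarrow> 'v state \<Rightarrow> 'v \<Rightarrow> 'v state" where
  "move N s v = ((fst s)[snd s - 1 := v], next_tok N (snd s))"

text \<open>A (pure, history dependent) strategy profile assigns to each token n a map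
from finite histories (nonempty lists of states, last = current state) to vertices.\<close>
type_synonym 'v profile = "nat \<Rightarrow> 'v hist \<Rightarrow> 'v"

fun play :: "nat \<Rightarrow> 'v profile \<Rightarrow> 'v state \<Rightarrow> nat \<Rightarrow> 'v hist" where
  "play N prof s0 0 = [s0]"
| "play N prof s0 (Suc t) =
     (let h = play N prof s0 t; s = last h in h @ [move N s (prof (snd s) h)])"

definition state_at :: "nat \<Rightarrow> 'v profile \<Rightarrow> 'v state \<Rightarrow> nat \<Rightarrow> 'v state" where
  "state_at N prof s0 t = last (play N prof s0 t)"

definition legal_strat :: "nat \<Rightarrow> ('v \<Rightarrow> 'v \<Rightarrow> bool) \<Rightarrow> nat \<Rightarrow> ('v hist \<Rightarrow> 'v) \<Rightarrow> bool" where
  "legal_strat N E n g \<longleftrightarrow>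
     (\<forall>h. h \<noteq> [] \<and> snd (last h) = n \<and> \<not> is_capture N (last h)
          \<longrightarrow> g h \<in> cnbhd E (tpos (fst (last h)) n))"

definition legal_profile :: "nat \<Rightarrow> ('v \<Rightarrow> 'v \<Rightarrow> bool) \<Rightarrow> 'v profile \<Rightarrow> bool" where
  "legal_profile N E prof \<longleftrightarrow> (\<forall>n\<in>{1..N}. legal_strat N E n (prof n))"

definition reward :: "nat \<Rightarrow> real \<Rightarrow> nat \<Rightarrow> 'v list \<Rightarrow> real" where
  "reward N eps m xs =
    (let K = card {i\<in>{1..N-1}. tpos xs i = tpos xs N} in
     if m = N then -1
     else if K = N - 1 then 1 / real (N - 1)
     else if tpos xs m = tpos xs N then (1 - eps) / real K
     else eps / real (N - K - 1))"

definition payoff :: "nat \<Rightarrow> real \<Rightarrow> real \<Rightarrow> nat \<Rightarrow> 'v profile \<Rightarrow> 'v state \<Rightarrow> real" where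
  "payoff N gam eps m prof s0 =
    (if \<exists>t. is_capture N (state_at N prof s0 t)
     then (let t = (LEAST t. is_capture N (state_at N prof s0 t)) in
           reward N eps m (fst (state_at N prof s0 t)) * gam ^ t)
     else 0)"

text \<open>An optimal strategy pair of \<Gamma>^m_N, optimal from every initial noncapture
state: P_m controls token m (strategy prof m), P_{-m} controls the other tokens.\<close>
definition optimal_pair ::
  "nat \<Rightarrow> 'v set \<Rightarrow> ('v \<Rightarrow> 'v \<Rightarrow> bool) \<Rightarrow> real \<Rightarrow> real \<Rightarrow> nat \<Rightarrow> 'v profile \<Rightarrow> bool" where
  "optimal_pair N V E gam eps m prof \<longleftrightarrow>
     legal_profile N E prof \<and>
     (\<forall>s0. valid_state N V s0 \<and> \<not> is_capture N s0 \<longrightarrow>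
        (\<forall>prof'. legal_profile N E prof' \<longrightarrow>
            payoff N gam eps m prof s0 \<le> payoff N gam eps m (prof'(m := prof m)) s0
          \<and> payoff N gam eps m (prof(m := prof' m)) s0 \<le> payoff N gam eps m prof s0))"

definition posprof :: "(nat \<Rightarrow> 'v state \<Rightarrow> 'v) \<Rightarrow> 'v profile" where
  "posprof phi = (\<lambda>n h. phi n (last h))"

definition pos_optimal ::
  "nat \<Rightarrow> 'v set \<Rightarrow> ('v \<Rightarrow> 'v \<Rightarrow> bool) \<Rightarrow> real \<Rightarrow> real \<Rightarrow> nat \<Rightarrow> (nat \<Rightarrow> 'v state \<Rightarrow> 'v) \<Rightarrow> bool" where
  "pos_optimal N V E gam eps m phi \<longleftrightarrow> optimal_pair N V E gam eps m (posprof phi)"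

text \<open>CR-optimal strategies of token n (the set \<widehat>\<Sigma>^n): components of optimal pure
positional strategy pairs of \<Gamma>^N_N.\<close>
definition cr_optimal ::
  "nat \<Rightarrow> 'v set \<Rightarrow> ('v \<Rightarrow> 'v \<Rightarrow> bool) \<Rightarrow> real \<Rightarrow> real \<Rightarrow> nat \<Rightarrow> ('v state \<Rightarrow> 'v) \<Rightarrow> bool" where
  "cr_optimal N V E gam eps n sigma \<longleftrightarrow> (\<exists>phi. pos_optimal N V E gam eps N phi \<and> phi n = sigma)"

inductive reach :: "nat \<Rightarrow> ('v \<Rightarrow> 'v \<Rightarrow> bool) \<Rightarrow> 'v state \<Rightarrow> 'v state \<Rightarrow> bool"
  for N E s0 where
  reach_refl: "reach N E s0 s0"
| reach_step: "reach N E s0 s \<Longrightarrow> \<not> is_capture N s \<Longrightarrow> v \<in> cnbhd E (tpos (fst s) (snd s))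
                 \<Longrightarrow> reach N E s0 (move N s v)"

text \<open>Positional trigger strategies profile, determined by the choice
phi m n = \<phi>^n_m (strategy of token n in the chosen optimal pair of \<Gamma>^m_N).\<close>
definition positional_trigger ::
  "nat \<Rightarrow> 'v set \<Rightarrow> ('v \<Rightarrow> 'v \<Rightarrow> bool) \<Rightarrow> real \<Rightarrow> real \<Rightarrow> 'v state
     \<Rightarrow> (nat \<Rightarrow> nat \<Rightarrow> 'v state \<Rightarrow> 'v) \<Rightarrow> bool" where
  "positional_trigger N V E gam eps s0 phi \<longleftrightarrow>
     (\<forall>n\<in>{1..N}. \<forall>m\<in>{1..N}. \<exists>sigma. cr_optimal N V E gam eps n sigma \<and>
        (\<forall>s. reach N E s0 s \<and> snd s = n \<and> \<not> is_capture N s \<longrightarrow> phi m n s = sigma s))"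

definition force_capture :: "nat \<Rightarrow> ('v \<Rightarrow> 'v \<Rightarrow> bool) \<Rightarrow> nat set \<Rightarrow> 'v state \<Rightarrow> bool" where
  "force_capture N E K s \<longleftrightarrow>
     (\<exists>prof. (\<forall>n\<in>K. legal_strat N E n (prof n)) \<and>
        (\<forall>prof'. legal_profile N E prof' \<longrightarrow>
           (\<exists>t. is_capture N (state_at N (\<lambda>n. if n \<in> K then prof n else prof' n) s t))))"

text \<open>c(G|s) = \<infinity>: no nonempty set of at most N-1 cops can force a capture.\<close>
definition state_cop_infinite :: "nat \<Rightarrow> ('v \<Rightarrow> 'v \<Rightarrow> bool) \<Rightarrow> 'v state \<Rightarrow> bool" where
  "state_cop_infinite N E s \<longleftrightarrow>
     (\<forall>K. K \<subseteq> {1..N-1} \<and> K \<noteq> {} \<longrightarrow> \<not> force_capture N E K s)"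

text \<open>Classical game with k cops: cops place (c0), robber places (r0, seeing c0),
then alternately all cops move simultaneously and the robber moves.  States are
(cop positions, robber position, cops-to-move flag).\<close>
type_synonym 'v cstate = "'v list \<times> 'v \<times> bool"

fun cl_play :: "'v list \<Rightarrow> ('v list \<Rightarrow> 'v) \<Rightarrow> ('v cstate list \<Rightarrow> 'v list)
                  \<Rightarrow> ('v cstate list \<Rightarrow> 'v) \<Rightarrow> nat \<Rightarrow> 'v cstate list" where
  "cl_play c0 r0 cm rm 0 = [(c0, r0 c0, True)]"
| "cl_play c0 r0 cm rm (Suc t) =
     (let h = cl_play c0 r0 cm rm t; s = last h in
      if snd (snd s) then h @ [(cm h, fst (snd s), False)]
      else h @ [(fst s, rm h, True)])"

definition cops_win :: "'v set \<Rightarrow> ('v \<Rightarrow> 'v \<Rightarrow> bool) \<Rightarrow> nat \<Rightarrow> bool" where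
  "cops_win V E k \<longleftrightarrow>
    (\<exists>c0 cm. length c0 = k \<and> set c0 \<subseteq> V \<and>
      (\<forall>h. h \<noteq> [] \<and> snd (snd (last h)) \<and> length (fst (last h)) = k \<longrightarrow>
          length (cm h) = k \<and> (\<forall>i<k. cm h ! i \<in> cnbhd E (fst (last h) ! i))) \<and>
      (\<forall>r0 rm. (\<forall>c. r0 c \<in> V) \<and>
         (\<forall>h. h \<noteq> [] \<and> \<not> snd (snd (last h)) \<longrightarrow> rm h \<in> cnbhd E (fst (snd (last h))))
         \<longrightarrow> (\<exists>t. fst (snd (last (cl_play c0 r0 cm rm t))) \<in> set (fst (last (cl_play c0 r0 cm rm t))))))"

definition cop_number :: "'v set \<Rightarrow> ('v \<Rightarrow> 'v \<Rightarrow> bool) \<Rightarrow> nat" where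
  "cop_number V E = (LEAST k. cops_win V E k)"

definition in_G2 :: "nat \<Rightarrow> 'v set \<Rightarrow> ('v \<Rightarrow> 'v \<Rightarrow> bool) \<Rightarrow> bool" where
  "in_G2 N V E \<longleftrightarrow> N - 1 < cop_number V E \<and>
     (\<forall>s. valid_state N V s \<and> snd s = N \<and> \<not> is_capture N s \<longrightarrow> state_cop_infinite N E s)"

end

theory Submission
  imports Defs Complex_Main
begin

(* One positional profile, greedy_escape, is optimal in every auxiliary game Gamma^m_N with
   epsilon = 0: a cop adjacent to the robber steps onto it and otherwise stays put, and the
   robber moves to a vertex outside the closed neighbourhoods of all cops.  Its value is
   explicit: in the current round the first cop to move that is adjacent to the robber
   captures it alone, and otherwise there is never a capture.  A one-step verification
   argument for discounted stopping games shows that this value is a saddle point of every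
   Gamma^m_N.  The robber's safe vertex exists because G is in G_2(N): without one, the greedy
   cops would capture within the round whatever the robber does, so c(G|s) would be finite.
   As the same positional strategies serve for all m, the resulting trigger profile is
   positional. *)

lemma play_nonempty: "play N P s0 t \<noteq> []"
  by (cases t) (simp_all add: Let_def)

lemma last_play: "last (play N P s0 t) = state_at N P s0 t"
  by (simp add: state_at_def)

lemma state_at_0: "state_at N P s0 0 = s0"
  by (simp add: state_at_def)

lemma state_at_Suc:
  "state_at N P s0 (Suc t) =
     move N (state_at N P s0 t) (P (snd (state_at N P s0 t)) (play N P s0 t))"
  by (simp add: state_at_def Let_def)

definition discounted_capture ::
  "nat \<Rightarrow> real \<Rightarrow> ('v list \<Rightarrow> real) \<Rightarrow> 'v profile \<Rightarrow> 'v state \<Rightarrow> real" where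
  "discounted_capture N gam R P s0 =
    (if \<exists>t. is_capture N (state_at N P s0 t)
     then (let t = (LEAST t. is_capture N (state_at N P s0 t)) in
           R (fst (state_at N P s0 t)) * gam ^ t)
     else 0)"

lemma payoff_eq_discounted_capture:
  "payoff N gam eps m P s0 = discounted_capture N gam (reward N eps m) P s0"
  by (simp add: payoff_def discounted_capture_def)

lemma discounted_capture_uminus:
  "discounted_capture N gam (\<lambda>xs. - R xs) P s0 = - discounted_capture N gam R P s0"
  by (simp add: discounted_capture_def Let_def)

lemma discounted_capture_nonzero_imp_capture:
  "discounted_capture N gam R P s0 \<noteq> 0 \<Longrightarrow> \<exists>t. is_capture N (state_at N P s0 t)"
  by (cases "\<exists>t. is_capture N (state_at N P s0 t)") (simp_all add: discounted_capture_def)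

lemma legal_profile_fun_upd:
  "legal_profile N E P \<Longrightarrow> legal_profile N E Q \<Longrightarrow> legal_profile N E (P(m := Q m))"
  by (simp add: legal_profile_def)

lemma move_at_admissible:
  assumes legal: "legal_profile N E P" and follows: "\<forall>n\<in>F. P n = posprof sg n"
    and turn: "snd (state_at N P s0 t) \<in> {1..N}"
    and nc: "\<not> is_capture N (state_at N P s0 t)"
  defines "s \<equiv> state_at N P s0 t"
  shows "P (snd s) (play N P s0 t) \<in> cnbhd E (tpos (fst s) (snd s))
      \<and> (snd s \<in> F \<longrightarrow> P (snd s) (play N P s0 t) = sg (snd s) s)"
proof
  show "P (snd s) (play N P s0 t) \<in> cnbhd E (tpos (fst s) (snd s))"
    using legal turn nc play_nonempty[of N P s0 t]
    unfolding s_def legal_profile_def legal_strat_def last_play[symmetric] by blast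
  show "snd s \<in> F \<longrightarrow> P (snd s) (play N P s0 t) = sg (snd s) s"
    using follows by (simp add: s_def posprof_def last_play)
qed

lemma discounted_descent:
  fixes x :: "nat \<Rightarrow> 'a" and W :: "'a \<Rightarrow> real"
  assumes Inv_0: "Inv (x 0)"
    and step: "\<And>t. Inv (x t) \<Longrightarrow> \<not> C (x t) \<Longrightarrow> \<not> C (x (Suc t))
        \<Longrightarrow> Inv (x (Suc t)) \<and> gam * W (x (Suc t)) \<le> W (x t)"
    and gam: "0 \<le> gam"
  shows "\<forall>i\<le>t. \<not> C (x i) \<Longrightarrow> Inv (x t) \<and> gam ^ t * W (x t) \<le> W (x 0)"
proof (induction t)
  case 0
  show ?case using Inv_0 by simp
next
  case (Suc t)
  then have IH: "Inv (x t)" "gam ^ t * W (x t) \<le> W (x 0)" by auto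
  have "Inv (x (Suc t)) \<and> gam * W (x (Suc t)) \<le> W (x t)"
    using step[OF IH(1)] Suc.prems by simp
  moreover from this have "gam ^ t * (gam * W (x (Suc t))) \<le> gam ^ t * W (x t)"
    using gam by (intro mult_left_mono) auto
  ultimately show ?case using IH(2) by (simp add: algebra_simps)
qed

text \<open>The verification argument of dynamic programming: W s0 \<ge> gam ^ t * W (state t)
along the play until capture; on a play without capture this gives W s0 \<ge> gam ^ t * B,
which tends to the payoff 0.\<close>
lemma discounted_capture_le:
  fixes W :: "'v state \<Rightarrow> real" and sg :: "nat \<Rightarrow> 'v state \<Rightarrow> 'v"
  assumes legal: "legal_profile N E P"
    and follows: "\<forall>n\<in>F. P n = posprof sg n"
    and Inv_token: "\<And>s. Inv s \<Longrightarrow> snd s \<in> {1..N}"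
    and Inv_s0: "Inv s0" and noncapture_s0: "\<not> is_capture N s0"
    and capture_step: "\<And>s v. Inv s \<Longrightarrow> \<not> is_capture N s
        \<Longrightarrow> v \<in> cnbhd E (tpos (fst s) (snd s)) \<Longrightarrow> (snd s \<in> F \<longrightarrow> v = sg (snd s) s)
        \<Longrightarrow> is_capture N (move N s v) \<Longrightarrow> gam * R (fst (move N s v)) \<le> W s"
    and continue_step: "\<And>s v. Inv s \<Longrightarrow> \<not> is_capture N s
        \<Longrightarrow> v \<in> cnbhd E (tpos (fst s) (snd s)) \<Longrightarrow> (snd s \<in> F \<longrightarrow> v = sg (snd s) s)
        \<Longrightarrow> \<not> is_capture N (move N s v) \<Longrightarrow> Inv (move N s v) \<and> gam * W (move N s v) \<le> W s"
    and bounded: "\<And>s. Inv s \<Longrightarrow> B \<le> W s"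
    and gam: "0 \<le> gam" "gam < 1"
  shows "discounted_capture N gam R P s0 \<le> W s0"
proof -
  define st where "st = state_at N P s0"
  define mv where "mv t = P (snd (st t)) (play N P s0 t)" for t
  have st_Suc: "st (Suc t) = move N (st t) (mv t)" for t
    by (simp add: st_def mv_def state_at_Suc)
  have st_0: "st 0 = s0"
    by (simp add: st_def state_at_0)
  have mv_admissible: "mv t \<in> cnbhd E (tpos (fst (st t)) (snd (st t)))
      \<and> (snd (st t) \<in> F \<longrightarrow> mv t = sg (snd (st t)) (st t))"
    if "Inv (st t)" "\<not> is_capture N (st t)" for t
    using move_at_admissible[OF legal follows] Inv_token[OF that(1)] that(2)
    unfolding st_def mv_def by blast
  have descent: "\<forall>i\<le>t. \<not> is_capture N (st i) \<Longrightarrow> Inv (st t) \<and> gam ^ t * W (st t) \<le> W s0"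
    for t
  proof (rule discounted_descent[where x = st, OF _ _ gam(1), unfolded st_0])
    show "Inv (st (Suc t)) \<and> gam * W (st (Suc t)) \<le> W (st t)"
      if "Inv (st t)" "\<not> is_capture N (st t)" "\<not> is_capture N (st (Suc t))" for t
      using continue_step[OF that(1,2)] mv_admissible[OF that(1,2)] that(3)
      unfolding st_Suc by simp
  qed (rule Inv_s0)
  show ?thesis
  proof (cases "\<exists>t. is_capture N (st t)")
    case True
    define T where "T = (LEAST t. is_capture N (st t))"
    have capture_T: "is_capture N (st T)" using True LeastI_ex T_def by metis
    have "T \<noteq> 0" using capture_T noncapture_s0 st_0 by metis
    then obtain t where T: "T = Suc t" using not0_implies_Suc by blast
    have "\<forall>i\<le>t. \<not> is_capture N (st i)"
      using not_less_Least[where P = "\<lambda>t. is_capture N (st t)"] T unfolding T_def by auto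
    then have Inv_t: "Inv (st t)" and nc: "\<not> is_capture N (st t)"
      and discounted: "gam ^ t * W (st t) \<le> W s0" using descent by auto
    have "gam * R (fst (st T)) \<le> W (st t)"
      using capture_T unfolding T st_Suc
      using capture_step[OF Inv_t nc] mv_admissible[OF Inv_t nc] by simp
    then have "gam ^ t * (gam * R (fst (st T))) \<le> gam ^ t * W (st t)"
      using gam by (intro mult_left_mono) auto
    moreover have "discounted_capture N gam R P s0 = R (fst (st T)) * gam ^ T"
      using True by (simp add: discounted_capture_def st_def T_def Let_def)
    ultimately show ?thesis using discounted T by (simp add: algebra_simps)
  next
    case False
    then have "discounted_capture N gam R P s0 = 0"
      by (simp add: discounted_capture_def st_def)
    moreover have "(\<lambda>t. gam ^ t * B) \<longlonglongrightarrow> 0 * B"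
      using gam by (intro tendsto_mult_right LIMSEQ_realpow_zero)
    moreover have "gam ^ t * B \<le> W s0" for t
    proof -
      have "Inv (st t)" "gam ^ t * W (st t) \<le> W s0" using descent False by auto
      moreover from this have "gam ^ t * B \<le> gam ^ t * W (st t)"
        using bounded gam by (intro mult_left_mono) auto
      ultimately show ?thesis by linarith
    qed
    ultimately show ?thesis using LIMSEQ_le_const2 by fastforce
  qed
qed

lemma discounted_capture_ge:
  fixes W :: "'v state \<Rightarrow> real" and sg :: "nat \<Rightarrow> 'v state \<Rightarrow> 'v"
  assumes legal: "legal_profile N E P"
    and follows: "\<forall>n\<in>F. P n = posprof sg n"
    and Inv_token: "\<And>s. Inv s \<Longrightarrow> snd s \<in> {1..N}"
    and Inv_s0: "Inv s0" and noncapture_s0: "\<not> is_capture N s0"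
    and capture_step: "\<And>s v. Inv s \<Longrightarrow> \<not> is_capture N s
        \<Longrightarrow> v \<in> cnbhd E (tpos (fst s) (snd s)) \<Longrightarrow> (snd s \<in> F \<longrightarrow> v = sg (snd s) s)
        \<Longrightarrow> is_capture N (move N s v) \<Longrightarrow> W s \<le> gam * R (fst (move N s v))"
    and continue_step: "\<And>s v. Inv s \<Longrightarrow> \<not> is_capture N s
        \<Longrightarrow> v \<in> cnbhd E (tpos (fst s) (snd s)) \<Longrightarrow> (snd s \<in> F \<longrightarrow> v = sg (snd s) s)
        \<Longrightarrow> \<not> is_capture N (move N s v) \<Longrightarrow> Inv (move N s v) \<and> W s \<le> gam * W (move N s v)"
    and bounded: "\<And>s. Inv s \<Longrightarrow> W s \<le> B"
    and gam: "0 \<le> gam" "gam < 1"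
  shows "W s0 \<le> discounted_capture N gam R P s0"
proof -
  have "discounted_capture N gam (\<lambda>xs. - R xs) P s0 \<le> - W s0"
  proof (rule discounted_capture_le[where W = "\<lambda>s. - W s" and B = "- B" and R = "\<lambda>xs. - R xs"
                and Inv = Inv and F = F and sg = sg,
                OF legal follows Inv_token Inv_s0 noncapture_s0])
    show "gam * - R (fst (move N s v)) \<le> - W s"
      if "Inv s" "\<not> is_capture N s" "v \<in> cnbhd E (tpos (fst s) (snd s))"
        "snd s \<in> F \<longrightarrow> v = sg (snd s) s" "is_capture N (move N s v)" for s v
      using capture_step[OF that] by simp
    show "Inv (move N s v) \<and> gam * - W (move N s v) \<le> - W s"
      if "Inv s" "\<not> is_capture N s" "v \<in> cnbhd E (tpos (fst s) (snd s))"
        "snd s \<in> F \<longrightarrow> v = sg (snd s) s" "\<not> is_capture N (move N s v)" for s v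
      using continue_step[OF that] by simp
    show "- B \<le> - W s" if "Inv s" for s
      using bounded[OF that] by simp
  qed (use gam in auto)
  then show ?thesis by (simp add: discounted_capture_uminus)
qed

locale cops_robber_board =
  fixes N :: nat and V :: "'v set" and E :: "'v \<Rightarrow> 'v \<Rightarrow> bool"
  assumes three_tokens: "N \<ge> 3" and graph: "fsc_graph V E"
begin

lemma cnbhd_refl: "x \<in> cnbhd E x"
  by (simp add: cnbhd_def)

lemma cnbhd_sym: "x \<in> cnbhd E y \<longleftrightarrow> y \<in> cnbhd E x"
  using graph by (auto simp: cnbhd_def fsc_graph_def)

lemma cnbhd_in_V: "x \<in> V \<Longrightarrow> y \<in> cnbhd E x \<Longrightarrow> y \<in> V"
  using graph by (auto simp: cnbhd_def fsc_graph_def)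

lemma tpos_in_V:
  assumes "valid_state N V s" "k \<in> {1..N}"
  shows "tpos (fst s) k \<in> V"
proof -
  have "fst s ! (k - 1) \<in> set (fst s)"
    using assms by (intro nth_mem) (auto simp: valid_state_def)
  then show ?thesis using assms by (auto simp: valid_state_def tpos_def)
qed

lemma tpos_move:
  assumes "valid_state N V s" "k \<in> {1..N}"
  shows "tpos (fst (move N s v)) k = (if k = snd s then v else tpos (fst s) k)"
  using assms unfolding valid_state_def tpos_def move_def by (auto simp: nth_list_update)

lemma valid_state_move:
  assumes "valid_state N V s" "v \<in> cnbhd E (tpos (fst s) (snd s))"
  shows "valid_state N V (move N s v)"
proof -
  have "v \<in> V"
    using assms tpos_in_V[OF assms(1), of "snd s"] cnbhd_in_V by (auto simp: valid_state_def)
  then show ?thesis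
    using assms(1) set_update_subset_insert[of "fst s" "snd s - 1" v] three_tokens
    by (auto simp: valid_state_def move_def next_tok_def)
qed

definition adjacent :: "'v state \<Rightarrow> nat \<Rightarrow> bool" where
  "adjacent s k \<longleftrightarrow> tpos (fst s) k \<in> cnbhd E (tpos (fst s) N)"

definition safe_vertex :: "'v state \<Rightarrow> 'v \<Rightarrow> bool" where
  "safe_vertex s v \<longleftrightarrow>
     v \<in> cnbhd E (tpos (fst s) N) \<and> (\<forall>i\<in>{1..N-1}. tpos (fst s) i \<notin> cnbhd E v)"

definition greedy_escape :: "nat \<Rightarrow> 'v state \<Rightarrow> 'v" where
  "greedy_escape n s =
    (if n = N then (if \<exists>v. safe_vertex s v then SOME v. safe_vertex s v else tpos (fst s) N)
     else if adjacent s n then tpos (fst s) N else tpos (fst s) n)"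

definition threatened :: "'v state \<Rightarrow> bool" where
  "threatened s \<longleftrightarrow> (\<exists>k. snd s \<le> k \<and> k < N \<and> adjacent s k)"

definition captor :: "'v state \<Rightarrow> nat" where
  "captor s = (LEAST k. snd s \<le> k \<and> k < N \<and> adjacent s k)"

definition solo_capture_reward :: "nat \<Rightarrow> nat \<Rightarrow> real" where
  "solo_capture_reward m k = (if m = N then -1 else if m = k then 1 else 0)"

text \<open>Under greedy_escape the first cop still to move in the current round that is
adjacent to the robber captures it alone, captor s - snd s + 1 moves later; if there
is no such cop, the robber escapes to a safe vertex forever.\<close>
definition greedy_value :: "real \<Rightarrow> nat \<Rightarrow> 'v state \<Rightarrow> real" where
  "greedy_value g m s =
    (if threatened s then solo_capture_reward m (captor s) * g ^ (captor s - snd s + 1) else 0)"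

lemma greedy_escape_safe: "safe_vertex s v \<Longrightarrow> safe_vertex s (greedy_escape N s)"
  using someI_ex[of "safe_vertex s"] by (auto simp: greedy_escape_def)

lemma greedy_escape_legal: "greedy_escape n s \<in> cnbhd E (tpos (fst s) n)"
proof (cases "n = N")
  case True
  then show ?thesis
    using greedy_escape_safe[of s] cnbhd_refl
    by (cases "\<exists>v. safe_vertex s v") (auto simp: greedy_escape_def safe_vertex_def)
next
  case False
  then show ?thesis
    using cnbhd_refl cnbhd_sym by (auto simp: greedy_escape_def adjacent_def)
qed

lemma legal_profile_greedy_escape: "legal_profile N E (posprof greedy_escape)"
  using greedy_escape_legal by (simp add: legal_profile_def legal_strat_def posprof_def)

lemma reward_cop_bounds:
  assumes "m \<noteq> N"
  shows "0 \<le> reward N 0 m xs" "reward N 0 m xs \<le> 1"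
proof -
  have "1 / real k \<le> 1" for k :: nat by (cases k) auto
  then show "0 \<le> reward N 0 m xs" "reward N 0 m xs \<le> 1"
    using assms by (auto simp: reward_def Let_def)
qed

lemma greedy_value_robber_bounds:
  "0 \<le> g \<Longrightarrow> g \<le> 1 \<Longrightarrow> -1 \<le> greedy_value g N s \<and> greedy_value g N s \<le> 0"
  unfolding greedy_value_def solo_capture_reward_def
  using power_le_one[of g "captor s - snd s + 1"] by auto

lemma greedy_value_cop_bounds:
  "m \<noteq> N \<Longrightarrow> 0 \<le> g \<Longrightarrow> g \<le> 1 \<Longrightarrow> 0 \<le> greedy_value g m s \<and> greedy_value g m s \<le> 1"
  unfolding greedy_value_def solo_capture_reward_def
  using power_le_one[of g "captor s - snd s + 1"] by auto

lemma greedy_value_bounds: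
  "0 \<le> g \<Longrightarrow> g \<le> 1 \<Longrightarrow> -1 \<le> greedy_value g m s \<and> greedy_value g m s \<le> 1"
  using greedy_value_robber_bounds[of g s] greedy_value_cop_bounds[of m g s]
  by (cases "m = N") auto

lemma greedy_value_robber_turn: "snd s = N \<Longrightarrow> greedy_value g m s = 0"
  by (auto simp: greedy_value_def threatened_def)

lemma greedy_value_adjacent_mover:
  assumes "snd s < N" "adjacent s (snd s)"
  shows "greedy_value g m s = g * solo_capture_reward m (snd s)"
proof -
  have "captor s = snd s"
    unfolding captor_def using assms by (intro Least_equality) auto
  then show ?thesis using assms by (auto simp: greedy_value_def threatened_def)
qed

lemma capture_by_moving_onto_robber:
  assumes valid: "valid_state N V s" and nc: "\<not> is_capture N s" and cop: "snd s < N"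
  shows "is_capture N (move N s (tpos (fst s) N))"
    and "m \<in> {1..N} \<Longrightarrow> reward N 0 m (fst (move N s (tpos (fst s) N))) = solo_capture_reward m (snd s)"
proof -
  define s' where "s' = move N s (tpos (fst s) N)"
  have pos: "tpos (fst s') k = (if k = snd s then tpos (fst s) N else tpos (fst s) k)"
    if "k \<in> {1..N}" for k
    using tpos_move[OF valid that] by (simp add: s'_def)
  have robber: "tpos (fst s') N = tpos (fst s) N"
    using pos[of N] cop three_tokens by auto
  have at_robber: "tpos (fst s') i = tpos (fst s') N \<longleftrightarrow> i = snd s" if "i \<in> {1..N-1}" for i
  proof -
    have "tpos (fst s') i = (if i = snd s then tpos (fst s) N else tpos (fst s) i)"
      using that by (intro pos) auto
    then show ?thesis using that robber nc by (auto simp: is_capture_def)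
  qed
  then have cop_set: "{i\<in>{1..N-1}. tpos (fst s') i = tpos (fst s') N} = {snd s}"
    using cop valid by (auto simp: valid_state_def)
  then show "is_capture N (move N s (tpos (fst s) N))"
    unfolding s'_def[symmetric] is_capture_def by blast
  assume m: "m \<in> {1..N}"
  have "(tpos (fst s') m = tpos (fst s') N) = (m = snd s)" if "m \<noteq> N"
    using m that by (intro at_robber) auto
  then show "reward N 0 m (fst s') = solo_capture_reward m (snd s)"
    using m three_tokens unfolding reward_def solo_capture_reward_def cop_set by auto
qed

lemma threatened_captor:
  assumes "threatened s"
  shows "snd s \<le> captor s" "captor s < N" "adjacent s (captor s)"
  using LeastI_ex[of "\<lambda>k. snd s \<le> k \<and> k < N \<and> adjacent s k"] assms
  by (auto simp: threatened_def captor_def)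

lemma nonadjacent_cop_move:
  assumes valid: "valid_state N V s" and nc: "\<not> is_capture N s" and cop: "snd s < N"
    and far: "\<not> adjacent s (snd s)" and v: "v \<in> cnbhd E (tpos (fst s) (snd s))"
  shows "\<not> is_capture N (move N s v)"
    and "threatened (move N s v) \<longleftrightarrow> threatened s"
    and "greedy_value g m s = g * greedy_value g m (move N s v)"
proof -
  define s' where "s' = move N s v"
  have turn: "snd s' = Suc (snd s)"
    using cop by (simp add: s'_def move_def next_tok_def)
  have pos: "tpos (fst s') k = (if k = snd s then v else tpos (fst s) k)" if "k \<in> {1..N}" for k
    using tpos_move[OF valid that] by (simp add: s'_def)
  have robber: "tpos (fst s') N = tpos (fst s) N"
    using pos[of N] cop three_tokens by auto
  have "v \<noteq> tpos (fst s) N"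
    using far v cnbhd_sym by (auto simp: adjacent_def)
  have "tpos (fst s') i \<noteq> tpos (fst s') N" if "i \<in> {1..N-1}" for i
  proof -
    have "tpos (fst s') i = (if i = snd s then v else tpos (fst s) i)"
      using that by (intro pos) auto
    then show ?thesis
      using that robber nc \<open>v \<noteq> tpos (fst s) N\<close> by (auto simp: is_capture_def)
  qed
  then show "\<not> is_capture N (move N s v)"
    by (auto simp: is_capture_def s'_def)
  have adjacent_eq: "adjacent s' k \<longleftrightarrow> adjacent s k" if "k \<in> {1..N}" "k \<noteq> snd s" for k
    using pos[OF that(1)] that(2) robber by (simp add: adjacent_def)
  have "snd s' \<le> k \<and> k < N \<and> adjacent s' k \<longleftrightarrow> snd s \<le> k \<and> k < N \<and> adjacent s k" for k
  proof (cases "k = snd s")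
    case True
    then show ?thesis using turn far by simp
  next
    case False
    have "1 \<le> snd s" using valid by (simp add: valid_state_def)
    then show ?thesis using adjacent_eq[of k] False turn by auto
  qed
  then have candidates: "(\<lambda>k. snd s' \<le> k \<and> k < N \<and> adjacent s' k)
      = (\<lambda>k. snd s \<le> k \<and> k < N \<and> adjacent s k)"
    by blast
  then show threatened: "threatened (move N s v) \<longleftrightarrow> threatened s"
    unfolding s'_def[symmetric] threatened_def by simp
  have captor: "captor s' = captor s"
    unfolding captor_def candidates ..
  have "captor s - snd s + 1 = Suc (captor s - snd s' + 1)" if "threatened s"
    using threatened_captor[OF that] far turn by (auto simp: le_less)
  then show "greedy_value g m s = g * greedy_value g m (move N s v)"
    using threatened captor unfolding s'_def[symmetric] greedy_value_def by auto
qed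

lemma robber_move:
  assumes valid: "valid_state N V s" and robber_turn: "snd s = N"
  shows "is_capture N (move N s v) \<longleftrightarrow> (\<exists>i\<in>{1..N-1}. tpos (fst s) i = v)"
    and "threatened (move N s v) \<longleftrightarrow> (\<exists>i\<in>{1..N-1}. tpos (fst s) i \<in> cnbhd E v)"
proof -
  have pos: "tpos (fst (move N s v)) i = tpos (fst s) i" if "i \<in> {1..N-1}" for i
    using tpos_move[OF valid, of i] that robber_turn by auto
  have robber: "tpos (fst (move N s v)) N = v"
    using tpos_move[OF valid, of N] robber_turn three_tokens by auto
  have turn: "snd (move N s v) = 1"
    using robber_turn by (simp add: move_def next_tok_def)
  show "is_capture N (move N s v) \<longleftrightarrow> (\<exists>i\<in>{1..N-1}. tpos (fst s) i = v)"
    using pos robber by (auto simp: is_capture_def)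
  show "threatened (move N s v) \<longleftrightarrow> (\<exists>i\<in>{1..N-1}. tpos (fst s) i \<in> cnbhd E v)"
    using pos robber turn by (fastforce simp: threatened_def adjacent_def)
qed

lemma safe_robber_move:
  assumes "valid_state N V s" "snd s = N" "safe_vertex s v"
  shows "\<not> is_capture N (move N s v)" and "greedy_value g m (move N s v) = 0"
  using robber_move[OF assms(1,2)] assms(3) cnbhd_refl
  by (fastforce simp: safe_vertex_def greedy_value_def)+

lemma cop_turn_upper:
  assumes valid: "valid_state N V s" and nc: "\<not> is_capture N s" and cop: "snd s < N"
    and v: "v \<in> cnbhd E (tpos (fst s) (snd s))"
    and greedy: "snd s \<noteq> m \<longrightarrow> v = greedy_escape (snd s) s"
    and m: "m \<in> {1..N}" and g: "0 \<le> g" "g \<le> 1"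
  shows "(is_capture N (move N s v) \<longrightarrow> g * reward N 0 m (fst (move N s v)) \<le> greedy_value g m s)
       \<and> (\<not> is_capture N (move N s v) \<longrightarrow> g * greedy_value g m (move N s v) \<le> greedy_value g m s)"
proof -
  consider (far) "\<not> adjacent s (snd s)"
    | (free) "adjacent s (snd s)" "snd s = m"
    | (chasing) "adjacent s (snd s)" "snd s \<noteq> m" by blast
  then show ?thesis
  proof cases
    case far
    then show ?thesis using nonadjacent_cop_move[OF valid nc cop far v] by simp
  next
    case free
    then have "m \<noteq> N" "greedy_value g m s = g * 1"
      using cop greedy_value_adjacent_mover[OF cop] by (auto simp: solo_capture_reward_def)
    moreover have "g * reward N 0 m (fst (move N s v)) \<le> g * 1"
      using reward_cop_bounds \<open>m \<noteq> N\<close> g by (intro mult_left_mono) auto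
    moreover have "g * greedy_value g m (move N s v) \<le> g * 1"
      using greedy_value_cop_bounds \<open>m \<noteq> N\<close> g by (intro mult_left_mono) auto
    ultimately show ?thesis by simp
  next
    case chasing
    then have "v = tpos (fst s) N"
      using greedy cop by (simp add: greedy_escape_def)
    then show ?thesis
      using capture_by_moving_onto_robber[OF valid nc cop] m
        greedy_value_adjacent_mover[OF cop chasing(1)] by simp
  qed
qed

lemma cop_turn_lower:
  assumes valid: "valid_state N V s" and nc: "\<not> is_capture N s" and cop: "snd s < N"
    and v: "v \<in> cnbhd E (tpos (fst s) (snd s))"
    and greedy: "snd s = m \<longrightarrow> v = greedy_escape (snd s) s"
    and m: "m \<in> {1..N}" and g: "0 \<le> g" "g \<le> 1"
  shows "(is_capture N (move N s v) \<longrightarrow> greedy_value g m s \<le> g * reward N 0 m (fst (move N s v)))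
       \<and> (\<not> is_capture N (move N s v) \<longrightarrow> greedy_value g m s \<le> g * greedy_value g m (move N s v))"
proof -
  consider (far) "\<not> adjacent s (snd s)"
    | (chasing) "adjacent s (snd s)" "snd s = m"
    | (free) "adjacent s (snd s)" "snd s \<noteq> m" by blast
  then show ?thesis
  proof cases
    case far
    then show ?thesis using nonadjacent_cop_move[OF valid nc cop far v] by simp
  next
    case chasing
    then have "v = tpos (fst s) N"
      using greedy cop by (simp add: greedy_escape_def)
    then show ?thesis
      using capture_by_moving_onto_robber[OF valid nc cop] m
        greedy_value_adjacent_mover[OF cop chasing(1)] by simp
  next
    case free
    then have loser: "greedy_value g m s = g * (if m = N then -1 else 0)"
      using greedy_value_adjacent_mover[OF cop] by (simp add: solo_capture_reward_def)
    show ?thesis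
    proof (cases "m = N")
      case True
      have "g * -1 \<le> g * greedy_value g m (move N s v)"
        using greedy_value_robber_bounds g True by (intro mult_left_mono) auto
      then show ?thesis using loser True by (simp add: reward_def)
    next
      case False
      have "0 \<le> g * reward N 0 m (fst (move N s v))"
        using g(1) reward_cop_bounds(1)[OF False] by (rule mult_nonneg_nonneg)
      moreover have "0 \<le> g * greedy_value g m (move N s v)"
        using g(1) greedy_value_cop_bounds[OF False g] by simp
      ultimately show ?thesis using loser False by simp
    qed
  qed
qed

lemma unsafe_robber_move:
  assumes valid: "valid_state N V s" and robber_turn: "snd s = N"
    and v: "v \<in> cnbhd E (tpos (fst s) N)" and unsafe: "\<not> safe_vertex s v"
    and g: "0 \<le> g" "g \<le> 1"
  shows "threatened (move N s v)" and "snd (move N s v) = 1"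
    and "g * greedy_value g N (move N s v) \<le> - (g ^ N)"
proof -
  show threatened: "threatened (move N s v)"
    using robber_move(2)[OF valid robber_turn] v unsafe by (auto simp: safe_vertex_def)
  show turn: "snd (move N s v) = 1"
    using robber_turn by (simp add: move_def next_tok_def)
  have "g ^ N \<le> g ^ (captor (move N s v) + 1)"
    using threatened_captor(2)[OF threatened] g by (intro power_decreasing) auto
  then show "g * greedy_value g N (move N s v) \<le> - (g ^ N)"
    using threatened turn threatened_captor(1)[OF threatened]
    by (simp add: greedy_value_def solo_capture_reward_def)
qed

lemma greedy_cop_move_keeps_threat:
  assumes valid: "valid_state N V s" and nc: "\<not> is_capture N s" and cop: "snd s < N"
    and threatened: "threatened s" and greedy: "v = greedy_escape (snd s) s"
    and nc': "\<not> is_capture N (move N s v)"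
  shows "threatened (move N s v)" and "snd (move N s v) < N"
proof -
  have far: "\<not> adjacent s (snd s)"
  proof
    assume "adjacent s (snd s)"
    then have "v = tpos (fst s) N"
      using greedy cop by (simp add: greedy_escape_def)
    then show False
      using capture_by_moving_onto_robber(1)[OF valid nc cop] nc' by simp
  qed
  have v: "v \<in> cnbhd E (tpos (fst s) (snd s))"
    using greedy greedy_escape_legal by simp
  show "threatened (move N s v)"
    using nonadjacent_cop_move(2)[OF valid nc cop far v] threatened by simp
  show "snd (move N s v) < N"
    using threatened_captor[OF threatened] far cop by (auto simp: le_less move_def next_tok_def)
qed

lemma cornered_robber_captured:
  assumes valid: "valid_state N V s" and nc: "\<not> is_capture N s" and robber_turn: "snd s = N"
    and cornered: "\<nexists>v. safe_vertex s v"
  shows "force_capture N E {1..N-1} s"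
  unfolding force_capture_def
proof (intro exI[where x = "posprof greedy_escape"] conjI allI impI)
  show "\<forall>n\<in>{1..N-1}. legal_strat N E n (posprof greedy_escape n)"
    using legal_profile_greedy_escape by (auto simp: legal_profile_def)
  fix prof' :: "'v profile"
  assume legal': "legal_profile N E prof'"
  define P where "P = (\<lambda>n. if n \<in> {1..N-1} then posprof greedy_escape n else prof' n)"
  have legal: "legal_profile N E P"
    using legal' legal_profile_greedy_escape by (simp add: P_def legal_profile_def)
  define Inv where "Inv u \<longleftrightarrow> valid_state N V u
      \<and> (if snd u = N then \<nexists>v. safe_vertex u v else threatened u)" for u
  text \<open>A strictly negative W bounding the robber's payoff certifies a capture, since
    the payoff vanishes on plays without capture.\<close>
  define W :: "'v state \<Rightarrow> real"
    where "W u = (if snd u = N then - ((1/2) ^ N) else greedy_value (1/2) N u)" for u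
  have "discounted_capture N (1/2) (reward N 0 N) P s \<le> W s"
  proof (rule discounted_capture_le[where Inv = Inv and F = "{1..N-1}" and sg = greedy_escape
        and B = "-1", OF legal])
    show "\<forall>n\<in>{1..N-1}. P n = posprof greedy_escape n"
      by (simp add: P_def)
    show "Inv s" "\<not> is_capture N s"
      using valid robber_turn cornered nc by (simp_all add: Inv_def)
    show "snd u \<in> {1..N}" if "Inv u" for u
      using that by (simp add: Inv_def valid_state_def)
    show "-1 \<le> W u" for u
      using greedy_value_robber_bounds[of "1/2" u] power_le_one[of "1/2 :: real" N]
      by (simp add: W_def)
    show "(0::real) \<le> 1/2" "(1/2::real) < 1" by simp_all
  next
    fix u v
    assume Inv: "Inv u" and nc: "\<not> is_capture N u" and v: "v \<in> cnbhd E (tpos (fst u) (snd u))"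
      and greedy: "snd u \<in> {1..N-1} \<longrightarrow> v = greedy_escape (snd u) u"
    have valid: "valid_state N V u" using Inv by (simp add: Inv_def)
    have cop_turn: "snd u < N" "threatened u" "v = greedy_escape (snd u) u" if "snd u \<noteq> N"
      using that Inv greedy by (auto simp: Inv_def valid_state_def)
    note upper = cop_turn_upper[OF valid nc _ v _ _, of N "1/2"]
    show "1/2 * reward N 0 N (fst (move N u v)) \<le> W u" if "is_capture N (move N u v)"
    proof (cases "snd u = N")
      case True
      have "((1::real)/2) ^ N \<le> (1/2) ^ 1"
        using three_tokens by (intro power_decreasing) auto
      then show ?thesis using True by (simp add: W_def reward_def)
    next
      case False
      then show ?thesis using upper cop_turn[OF False] that three_tokens by (simp add: W_def)
    qed
    show "Inv (move N u v) \<and> 1/2 * W (move N u v) \<le> W u" if nc': "\<not> is_capture N (move N u v)"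
    proof (cases "snd u = N")
      case True
      then have "\<not> safe_vertex u v" using Inv by (simp add: Inv_def)
      note robber = unsafe_robber_move[OF valid True _ this, of "1/2"]
      show ?thesis
        using robber v True three_tokens valid_state_move[OF valid v]
        by (simp add: Inv_def W_def)
    next
      case False
      note cop = greedy_cop_move_keeps_threat[OF valid nc cop_turn(1,2,3)[OF False] nc']
      show ?thesis
        using cop upper cop_turn[OF False] nc' three_tokens valid_state_move[OF valid v]
        by (simp add: Inv_def W_def)
    qed
  qed
  moreover have "W s < 0"
    using robber_turn by (simp add: W_def)
  ultimately show "\<exists>t. is_capture N (state_at N P s t)"
    by (intro discounted_capture_nonzero_imp_capture[where R = "reward N 0 N" and gam = "1/2"])
      simp
qed

end

locale cops_robber_G2 = cops_robber_board +
  assumes G2: "in_G2 N V E"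
begin

lemma safe_vertex_exists:
  assumes "valid_state N V s" "\<not> is_capture N s" "snd s = N"
  shows "\<exists>v. safe_vertex s v"
proof (rule ccontr)
  assume "\<nexists>v. safe_vertex s v"
  then have "force_capture N E {1..N-1} s"
    using cornered_robber_captured assms by blast
  moreover have "state_cop_infinite N E s"
    using G2 assms unfolding in_G2_def by blast
  ultimately show False
    using three_tokens by (auto simp: state_cop_infinite_def)
qed

lemma greedy_escape_robber_safe:
  assumes "valid_state N V s" "\<not> is_capture N s" "snd s = N"
  shows "safe_vertex s (greedy_escape N s)"
  using safe_vertex_exists[OF assms] greedy_escape_safe by blast

lemma greedy_value_step_upper:
  assumes valid: "valid_state N V s" and nc: "\<not> is_capture N s"
    and v: "v \<in> cnbhd E (tpos (fst s) (snd s))"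
    and greedy: "snd s \<noteq> m \<longrightarrow> v = greedy_escape (snd s) s"
    and m: "m \<in> {1..N}" and g: "0 \<le> g" "g \<le> 1"
  shows "(is_capture N (move N s v) \<longrightarrow> g * reward N 0 m (fst (move N s v)) \<le> greedy_value g m s)
       \<and> (\<not> is_capture N (move N s v) \<longrightarrow> g * greedy_value g m (move N s v) \<le> greedy_value g m s)"
proof (cases "snd s = N")
  case robber_turn: True
  show ?thesis
  proof (cases "m = N")
    case True
    then show ?thesis
      using robber_turn greedy_value_robber_turn greedy_value_robber_bounds[OF g] g
      by (simp add: reward_def mult_nonneg_nonpos)
  next
    case False
    then have "safe_vertex s v"
      using greedy robber_turn greedy_escape_robber_safe[OF valid nc robber_turn] by simp
    then show ?thesis
      using safe_robber_move[OF valid robber_turn] greedy_value_robber_turn[OF robber_turn] by simp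
  qed
next
  case False
  then have "snd s < N" using valid by (simp add: valid_state_def)
  then show ?thesis by (rule cop_turn_upper[OF valid nc _ v greedy m g])
qed

lemma greedy_value_step_lower:
  assumes valid: "valid_state N V s" and nc: "\<not> is_capture N s"
    and v: "v \<in> cnbhd E (tpos (fst s) (snd s))"
    and greedy: "snd s = m \<longrightarrow> v = greedy_escape (snd s) s"
    and m: "m \<in> {1..N}" and g: "0 \<le> g" "g \<le> 1"
  shows "(is_capture N (move N s v) \<longrightarrow> greedy_value g m s \<le> g * reward N 0 m (fst (move N s v)))
       \<and> (\<not> is_capture N (move N s v) \<longrightarrow> greedy_value g m s \<le> g * greedy_value g m (move N s v))"
proof (cases "snd s = N")
  case robber_turn: True
  show ?thesis
  proof (cases "m = N")
    case True
    then have "safe_vertex s v"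
      using greedy robber_turn greedy_escape_robber_safe[OF valid nc robber_turn] by simp
    then show ?thesis
      using safe_robber_move[OF valid robber_turn] greedy_value_robber_turn[OF robber_turn] by simp
  next
    case False
    have "0 \<le> g * reward N 0 m (fst (move N s v))"
      using g(1) reward_cop_bounds(1)[OF False] by (rule mult_nonneg_nonneg)
    moreover have "0 \<le> g * greedy_value g m (move N s v)"
      using g(1) greedy_value_cop_bounds[OF False g] by simp
    ultimately show ?thesis using greedy_value_robber_turn[OF robber_turn] by simp
  qed
next
  case False
  then have "snd s < N" using valid by (simp add: valid_state_def)
  then show ?thesis by (rule cop_turn_lower[OF valid nc _ v greedy m g])
qed

lemma payoff_le_greedy_value:
  assumes m: "m \<in> {1..N}" and legal: "legal_profile N E P"
    and others_greedy: "\<forall>n\<in>{n. n \<noteq> m}. P n = posprof greedy_escape n"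
    and s0: "valid_state N V s0" "\<not> is_capture N s0" and g: "0 \<le> g" "g < 1"
  shows "payoff N g 0 m P s0 \<le> greedy_value g m s0"
  unfolding payoff_eq_discounted_capture
proof (rule discounted_capture_le[where Inv = "valid_state N V" and B = "-1",
      OF legal others_greedy _ s0 _ _ _ g])
  fix s v
  assume valid: "valid_state N V s" and nc: "\<not> is_capture N s"
    and v: "v \<in> cnbhd E (tpos (fst s) (snd s))"
    and greedy: "snd s \<in> {n. n \<noteq> m} \<longrightarrow> v = greedy_escape (snd s) s"
  note step = greedy_value_step_upper[OF valid nc v _ m g(1) less_imp_le[OF g(2)]]
  show "is_capture N (move N s v) \<Longrightarrow> g * reward N 0 m (fst (move N s v)) \<le> greedy_value g m s"
    using step greedy by simp
  show "\<not> is_capture N (move N s v) \<Longrightarrow>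
      valid_state N V (move N s v) \<and> g * greedy_value g m (move N s v) \<le> greedy_value g m s"
    using step greedy valid_state_move[OF valid v] by simp
next
  show "-1 \<le> greedy_value g m s" for s
    using greedy_value_bounds[OF g(1) less_imp_le[OF g(2)]] by simp
qed (simp add: valid_state_def)

lemma greedy_value_le_payoff:
  assumes m: "m \<in> {1..N}" and legal: "legal_profile N E P"
    and greedy: "\<forall>n\<in>{m}. P n = posprof greedy_escape n"
    and s0: "valid_state N V s0" "\<not> is_capture N s0" and g: "0 \<le> g" "g < 1"
  shows "greedy_value g m s0 \<le> payoff N g 0 m P s0"
  unfolding payoff_eq_discounted_capture
proof (rule discounted_capture_ge[where Inv = "valid_state N V" and B = 1,
      OF legal greedy _ s0 _ _ _ g])
  fix s v
  assume valid: "valid_state N V s" and nc: "\<not> is_capture N s"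
    and v: "v \<in> cnbhd E (tpos (fst s) (snd s))"
    and greedy: "snd s \<in> {m} \<longrightarrow> v = greedy_escape (snd s) s"
  note step = greedy_value_step_lower[OF valid nc v _ m g(1) less_imp_le[OF g(2)]]
  show "is_capture N (move N s v) \<Longrightarrow> greedy_value g m s \<le> g * reward N 0 m (fst (move N s v))"
    using step greedy by simp
  show "\<not> is_capture N (move N s v) \<Longrightarrow>
      valid_state N V (move N s v) \<and> greedy_value g m s \<le> g * greedy_value g m (move N s v)"
    using step greedy valid_state_move[OF valid v] by simp
next
  show "greedy_value g m s \<le> 1" for s
    using greedy_value_bounds[OF g(1) less_imp_le[OF g(2)]] by simp
qed (simp add: valid_state_def)

lemma greedy_escape_pos_optimal:
  assumes m: "m \<in> {1..N}" and g: "0 \<le> g" "g < 1"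
  shows "pos_optimal N V E g 0 m greedy_escape"
  unfolding pos_optimal_def optimal_pair_def
proof (intro conjI allI impI)
  let ?P = "posprof greedy_escape"
  show legal: "legal_profile N E ?P" by (rule legal_profile_greedy_escape)
  fix s0 prof'
  assume "valid_state N V s0 \<and> \<not> is_capture N s0" and legal': "legal_profile N E prof'"
  then have s0: "valid_state N V s0" "\<not> is_capture N s0" by auto
  note upper = payoff_le_greedy_value[OF m _ _ s0 g] and lower = greedy_value_le_payoff[OF m _ _ s0 g]
  have "payoff N g 0 m ?P s0 \<le> greedy_value g m s0"
    by (rule upper) (simp_all add: legal)
  also have "\<dots> \<le> payoff N g 0 m (prof'(m := ?P m)) s0"
    by (rule lower) (simp_all add: legal_profile_fun_upd[OF legal' legal])
  finally show "payoff N g 0 m ?P s0 \<le> payoff N g 0 m (prof'(m := ?P m)) s0" .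
  have "payoff N g 0 m (?P(m := prof' m)) s0 \<le> greedy_value g m s0"
    by (rule upper) (simp_all add: legal_profile_fun_upd[OF legal legal'])
  also have "\<dots> \<le> payoff N g 0 m ?P s0"
    by (rule lower) (simp_all add: legal)
  finally show "payoff N g 0 m (?P(m := prof' m)) s0 \<le> payoff N g 0 m ?P s0" .
qed

end

theorem mainTheorem10:
  fixes V :: "'v set" and E :: "'v \<Rightarrow> 'v \<Rightarrow> bool" and N :: nat
    and s0 :: "'v state" and gam :: real
  assumes "N \<ge> 3"
    and "fsc_graph V E"
    and "in_G2 N V E"
    and "valid_state N V s0" and "\<not> is_capture N s0"
    and "0 < gam" and "gam < 1"
  shows "\<exists>phi. (\<forall>m\<in>{1..N}. pos_optimal N V E gam 0 m (phi m))
               \<and> positional_trigger N V E gam 0 s0 phi"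
proof -
  interpret cops_robber_G2 N V E
    using assms(1-3) by unfold_locales
  have optimal: "pos_optimal N V E gam 0 m greedy_escape" if "m \<in> {1..N}" for m
    using that assms(6,7) by (intro greedy_escape_pos_optimal) auto
  have "cr_optimal N V E gam 0 n (greedy_escape n)" for n
    using optimal[of N] assms(1) unfolding cr_optimal_def by auto
  text \<open>The punishment strategies coincide with greedy_escape as well, so the trigger
    profile is positional whatever s0 is.\<close>
  then have trigger: "positional_trigger N V E gam 0 s0 (\<lambda>m. greedy_escape)"
    unfolding positional_trigger_def by (intro ballI exI[where x = "greedy_escape n" for n]) auto
  show ?thesis
    using optimal trigger by (intro exI[where x = "\<lambda>m. greedy_escape"]) simp
qed

end
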